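(* Under the hypotheses of the $O(\tau)$ convergence theorem, the limit curve $X:[0,\infty)\to\mathbb H$ of $\underline X_t^\tau$ is locally absolutely continuous in $\mathbb H$ and solves \[\dot X(t)=-\nabla\phi^{\#}_{\rho_0}(X(t))\ \text{ for a.e. }t\in(0,\infty),\qquad X(0)=\mathrm{Id},\] where $\dot X$ is the Fréchet (time) derivative of $X:[0,\infty)\to\mathbb H$.
   Context: Hypotheses of the $O(\tau)$ convergence theorem: the standing hypotheses (S) below hold for every $\tau$ in a family $\tau\downarrow0$ (and $|\lambda|\tau<1$ if $\lambda<0$), with $\lim_{\tau\downarrow0}\|X_0^\tau-\mathrm{Id}\|_{\mathbb H}=0$ and $\sup_\tau\|\nabla\phi^{\#}_{\rho_0}(X_0^\tau)\|_{\mathbb H}<\infty$; $\underline X_t^\tau:=X_n^\tau$ for $t\in[n\tau,(n+1)\tau)$, and $\underline X^\tau$ converges locally uniformly in $\mathbb H$ to a locally Lipschitz curve $X$. Standing hypotheses (S): $\rho_0\in\mathcal P_2(\mathbb R^d)$; $\mathbb H=L^2(\mathbb R^d;\rho_0)$ is the Hilbert space of $\rho_0$-square-integrable maps $\mathbb R^d\to\mathbb R^d$; $\phi:\mathcal P_2(\mathbb R^d)\to\mathbb R$ has lift $\phi^{\#}_{\rho_0}(\xi):=\phi(\xi_{\#}\rho_0)$ which is Fréchet differentiable on $\mathbb H$ (gradient $\nabla\phi^{\#}_{\rho_0}$), $\lambda$-convex on $\mathbb H$ for some $\lambda\in\mathbb R$, and $\inf_{\mathbb H}\phi^{\#}_{\rho_0}>-\infty$;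 $\tau>0$ satisfies $\lambda/2+1/\tau>0$. Scheme: $X_{n+1}^\tau$ is the unique minimizer over $\xi\in\mathbb H$ of $\tfrac12\phi^{\#}_{\rho_0}(\xi)+\tfrac12\langle\nabla\phi^{\#}_{\rho_0}(X_n^\tau),\xi\rangle_{\mathbb H}+\tfrac1{2\tau}\|\xi-X_n^\tau\|^2_{\mathbb H}$. *)

theory Defs
  imports "HOL-Probability.Probability"
begin

text \<open>Wasserstein space P_2(R^d): Borel probability measures with finite second moment.
  R^d is modelled by an arbitrary Euclidean space type 'a.\<close>
definition P2 :: "'a::euclidean_space measure \<Rightarrow> bool" where
  "P2 \<mu> \<longleftrightarrow> prob_space \<mu> \<and> sets \<mu> = sets borel \<and> integrable \<mu> (\<lambda>x. (norm x)\<^sup>2)"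

text \<open>Elements of H = L^2(R^d; rho0) (maps R^d -> R^d, square integrable), represented by
  functions; the Hilbert structure (inner product, norm) is the L^2 one, so that
  rho0-a.e. equal maps are identified through the norm.\<close>
definition inH :: "'a::euclidean_space measure \<Rightarrow> ('a \<Rightarrow> 'a) \<Rightarrow> bool" where
  "inH \<rho> \<xi> \<longleftrightarrow> \<xi> \<in> borel_measurable \<rho> \<and> integrable \<rho> (\<lambda>x. (norm (\<xi> x))\<^sup>2)"

definition Hinner :: "'a::euclidean_space measure \<Rightarrow> ('a \<Rightarrow> 'a) \<Rightarrow> ('a \<Rightarrow> 'a) \<Rightarrow> real" where
  "Hinner \<rho> \<xi> \<eta> = (\<integral>x. \<xi> x \<bullet> \<eta> x \<partial>\<rho>)"

definition Hnorm :: "'a::euclidean_space measure \<Rightarrow> ('a \<Rightarrow> 'a) \<Rightarrow> real" where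
  "Hnorm \<rho> \<xi> = sqrt (\<integral>x. (norm (\<xi> x))\<^sup>2 \<partial>\<rho>)"

definition lift :: "('a::euclidean_space measure \<Rightarrow> real) \<Rightarrow> 'a measure \<Rightarrow> ('a \<Rightarrow> 'a) \<Rightarrow> real" where
  "lift \<phi> \<rho> \<xi> = \<phi> (distr \<rho> borel \<xi>)"

definition H_gradient :: "'a::euclidean_space measure \<Rightarrow> (('a \<Rightarrow> 'a) \<Rightarrow> real) \<Rightarrow> (('a \<Rightarrow> 'a) \<Rightarrow> ('a \<Rightarrow> 'a)) \<Rightarrow> bool" where
  "H_gradient \<rho> F G \<longleftrightarrow> (\<forall>\<xi>. inH \<rho> \<xi> \<longrightarrow> inH \<rho> (G \<xi>) \<and>
     (\<forall>\<epsilon>>0. \<exists>\<delta>>0. \<forall>\<eta>. inH \<rho> \<eta> \<and> Hnorm \<rho> (\<lambda>x. \<eta> x - \<xi> x) < \<delta> \<longrightarrow>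
        \<bar>F \<eta> - F \<xi> - Hinner \<rho> (G \<xi>) (\<lambda>x. \<eta> x - \<xi> x)\<bar> \<le> \<epsilon> * Hnorm \<rho> (\<lambda>x. \<eta> x - \<xi> x)))"

definition H_lambda_convex :: "'a::euclidean_space measure \<Rightarrow> real \<Rightarrow> (('a \<Rightarrow> 'a) \<Rightarrow> real) \<Rightarrow> bool" where
  "H_lambda_convex \<rho> lam F \<longleftrightarrow> (\<forall>\<xi> \<eta> s. inH \<rho> \<xi> \<and> inH \<rho> \<eta> \<and> 0 \<le> s \<and> s \<le> 1 \<longrightarrow>
     F (\<lambda>x. (1 - s) *\<^sub>R \<xi> x + s *\<^sub>R \<eta> x)
       \<le> (1 - s) * F \<xi> + s * F \<eta> - lam / 2 * s * (1 - s) * (Hnorm \<rho> (\<lambda>x. \<xi> x - \<eta> x))\<^sup>2)"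

definition scheme_fun :: "'a::euclidean_space measure \<Rightarrow> (('a \<Rightarrow> 'a) \<Rightarrow> real) \<Rightarrow> (('a \<Rightarrow> 'a) \<Rightarrow> ('a \<Rightarrow> 'a))
     \<Rightarrow> real \<Rightarrow> ('a \<Rightarrow> 'a) \<Rightarrow> ('a \<Rightarrow> 'a) \<Rightarrow> real" where
  "scheme_fun \<rho> F G \<tau> Xn \<xi> = F \<xi> / 2 + Hinner \<rho> (G Xn) \<xi> / 2 + (Hnorm \<rho> (\<lambda>x. \<xi> x - Xn x))\<^sup>2 / (2 * \<tau>)"

definition is_scheme :: "'a::euclidean_space measure \<Rightarrow> (('a \<Rightarrow> 'a) \<Rightarrow> real) \<Rightarrow> (('a \<Rightarrow> 'a) \<Rightarrow> ('a \<Rightarrow> 'a))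
     \<Rightarrow> real \<Rightarrow> (nat \<Rightarrow> 'a \<Rightarrow> 'a) \<Rightarrow> bool" where
  "is_scheme \<rho> F G \<tau> X \<longleftrightarrow> (\<forall>n. inH \<rho> (X n)) \<and>
     (\<forall>n. \<forall>\<xi>. inH \<rho> \<xi> \<longrightarrow> scheme_fun \<rho> F G \<tau> (X n) (X (Suc n)) \<le> scheme_fun \<rho> F G \<tau> (X n) \<xi>)"

definition interp :: "real \<Rightarrow> (nat \<Rightarrow> 'b) \<Rightarrow> real \<Rightarrow> 'b" where
  "interp \<tau> X t = X (nat \<lfloor>t / \<tau>\<rfloor>)"

definition H_loc_abs_cont :: "'a::euclidean_space measure \<Rightarrow> (real \<Rightarrow> 'a \<Rightarrow> 'a) \<Rightarrow> bool" where
  "H_loc_abs_cont \<rho> X \<longleftrightarrow> (\<forall>T\<ge>0. \<forall>\<epsilon>>0. \<exists>\<delta>>0. \<forall>(n::nat) a b.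
     (\<forall>i<n. 0 \<le> a i \<and> a i \<le> b i \<and> b i \<le> T) \<and>
     (\<forall>i<n. \<forall>j<n. i \<noteq> j \<longrightarrow> b i \<le> a j \<or> b j \<le> a i) \<and>
     (\<Sum>i<n. b i - a i) < \<delta> \<longrightarrow>
     (\<Sum>i<n. Hnorm \<rho> (\<lambda>x. X (b i) x - X (a i) x)) < \<epsilon>)"

end

theory Submission
  imports Defs
begin

text \<open>
  Minimality of \<open>X\<^sub>n\<^sub>+\<^sub>1\<close> gives the Euler--Lagrange equation
  \<open>X\<^sub>n\<^sub>+\<^sub>1 - X\<^sub>n = -\<tau>/2 (\<nabla>\<phi>(X\<^sub>n\<^sub>+\<^sub>1) + \<nabla>\<phi>(X\<^sub>n))\<close> in \<open>H\<close>.
  A Frechet differentiable \<open>\<lambda>\<close>-convex functional has a continuous gradient, so near a time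
  \<open>t > 0\<close> all gradients along the scheme are close to \<open>\<nabla>\<phi>(X(t))\<close>. Summing the
  Euler--Lagrange equations over the grid points between \<open>a\<close> and \<open>b\<close> and letting
  \<open>\<tau> \<rightarrow> 0\<close> yields \<open>\<parallel>X(b) - X(a) + (b - a) \<nabla>\<phi>(X(t))\<parallel> = o(b - a)\<close> for \<open>a \<le> b\<close> near \<open>t\<close>,
  i.e. \<open>X\<close> is differentiable at every \<open>t > 0\<close> with derivative \<open>-\<nabla>\<phi>(X(t))\<close>.
  Absolute continuity follows from the local Lipschitz bound, and \<open>X(0) = Id\<close> from the
  convergence of the initial data.
\<close>

section \<open>The Hilbert space \<open>L\<^sup>2(\<rho>)\<close>\<close>

lemma inH_add [simp]:
  assumes "inH \<rho> f" "inH \<rho> g"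
  shows "inH \<rho> (\<lambda>x. f x + g x)"
proof -
  have meas: "(\<lambda>x. f x + g x) \<in> borel_measurable \<rho>"
    using assms unfolding inH_def by (blast intro: borel_measurable_add)
  have "(norm (f x + g x))\<^sup>2 \<le> 2 * (norm (f x))\<^sup>2 + 2 * (norm (g x))\<^sup>2" for x
  proof -
    have "(norm (f x + g x))\<^sup>2 \<le> (norm (f x) + norm (g x))\<^sup>2"
      using norm_triangle_ineq[of "f x" "g x"] by (rule power_mono) simp
    also have "\<dots> \<le> 2 * (norm (f x))\<^sup>2 + 2 * (norm (g x))\<^sup>2"
      unfolding power2_sum using sum_squares_bound[of "norm (f x)" "norm (g x)"] by linarith
    finally show ?thesis .
  qed
  then have bound: "AE x in \<rho>. norm ((norm (f x + g x))\<^sup>2) \<le> norm (2 * (norm (f x))\<^sup>2 + 2 * (norm (g x))\<^sup>2)"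
    by simp
  have "integrable \<rho> (\<lambda>x. 2 * (norm (f x))\<^sup>2 + 2 * (norm (g x))\<^sup>2)"
    using assms unfolding inH_def by simp
  moreover have "(\<lambda>x. (norm (f x + g x))\<^sup>2) \<in> borel_measurable \<rho>"
    using meas by measurable
  ultimately have "integrable \<rho> (\<lambda>x. (norm (f x + g x))\<^sup>2)"
    using bound by (rule Bochner_Integration.integrable_bound)
  with meas show ?thesis
    by (simp add: inH_def)
qed

lemma inH_scaleR [simp]:
  assumes "inH \<rho> f"
  shows "inH \<rho> (\<lambda>x. c *\<^sub>R f x)"
  using assms unfolding inH_def by (auto simp: power_mult_distrib intro: borel_measurable_scaleR)

lemma inH_uminus [simp]: "inH \<rho> f \<Longrightarrow> inH \<rho> (\<lambda>x. - f x)"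
  using inH_scaleR[of \<rho> f "-1"] by simp

lemma inH_diff [simp]: "inH \<rho> f \<Longrightarrow> inH \<rho> g \<Longrightarrow> inH \<rho> (\<lambda>x. f x - g x)"
  using inH_add[of \<rho> f "\<lambda>x. - g x"] by simp

lemma integrable_inner_inH [simp]:
  assumes "inH \<rho> f" "inH \<rho> g"
  shows "integrable \<rho> (\<lambda>x. f x \<bullet> g x)"
proof (rule Bochner_Integration.integrable_bound)
  show "integrable \<rho> (\<lambda>x. (norm (f x))\<^sup>2 + (norm (g x))\<^sup>2)"
    using assms by (simp add: inH_def)
  show "(\<lambda>x. f x \<bullet> g x) \<in> borel_measurable \<rho>"
    using assms unfolding inH_def by (blast intro: borel_measurable_inner)
  have "\<bar>f x \<bullet> g x\<bar> \<le> (norm (f x))\<^sup>2 + (norm (g x))\<^sup>2" for x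
    using Cauchy_Schwarz_ineq2[of "f x" "g x"] sum_squares_bound[of "norm (f x)" "norm (g x)"]
      mult_nonneg_nonneg[OF norm_ge_zero norm_ge_zero, of "f x" "g x"]
    by linarith
  then show "AE x in \<rho>. norm (f x \<bullet> g x) \<le> norm ((norm (f x))\<^sup>2 + (norm (g x))\<^sup>2)"
    by simp
qed

lemma Hinner_commute: "Hinner \<rho> f g = Hinner \<rho> g f"
  by (simp add: Hinner_def inner_commute)

lemma Hinner_add_left [simp]:
  "inH \<rho> f \<Longrightarrow> inH \<rho> g \<Longrightarrow> inH \<rho> h \<Longrightarrow>
    Hinner \<rho> (\<lambda>x. f x + g x) h = Hinner \<rho> f h + Hinner \<rho> g h"
  by (simp add: Hinner_def inner_add_left)

lemma Hinner_diff_left [simp]: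
  "inH \<rho> f \<Longrightarrow> inH \<rho> g \<Longrightarrow> inH \<rho> h \<Longrightarrow>
    Hinner \<rho> (\<lambda>x. f x - g x) h = Hinner \<rho> f h - Hinner \<rho> g h"
  by (simp add: Hinner_def inner_diff_left)

lemma Hinner_scaleR_left [simp]: "Hinner \<rho> (\<lambda>x. c *\<^sub>R f x) h = c * Hinner \<rho> f h"
  by (simp add: Hinner_def)

lemma Hinner_add_right [simp]:
  "inH \<rho> f \<Longrightarrow> inH \<rho> g \<Longrightarrow> inH \<rho> h \<Longrightarrow>
    Hinner \<rho> h (\<lambda>x. f x + g x) = Hinner \<rho> h f + Hinner \<rho> h g"
  by (simp add: Hinner_def inner_add_right)

lemma Hinner_diff_right [simp]:
  "inH \<rho> f \<Longrightarrow> inH \<rho> g \<Longrightarrow> inH \<rho> h \<Longrightarrow>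
    Hinner \<rho> h (\<lambda>x. f x - g x) = Hinner \<rho> h f - Hinner \<rho> h g"
  by (simp add: Hinner_def inner_diff_right)

lemma Hinner_scaleR_right [simp]: "Hinner \<rho> h (\<lambda>x. c *\<^sub>R f x) = c * Hinner \<rho> h f"
  by (simp add: Hinner_def)

lemma Hnorm_nonneg [simp]: "0 \<le> Hnorm \<rho> f"
  by (simp add: Hnorm_def)

lemma Hnorm_power2: "(Hnorm \<rho> f)\<^sup>2 = Hinner \<rho> f f"
  by (simp add: Hnorm_def Hinner_def power2_norm_eq_inner[symmetric])

lemma Hnorm_scaleR: "Hnorm \<rho> (\<lambda>x. c *\<^sub>R f x) = \<bar>c\<bar> * Hnorm \<rho> f"
  by (simp add: Hnorm_def power_mult_distrib real_sqrt_mult)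

lemma Hnorm_uminus: "Hnorm \<rho> (\<lambda>x. - f x) = Hnorm \<rho> f"
  using Hnorm_scaleR[of \<rho> "-1" f] by simp

lemma Hnorm_minus_commute: "Hnorm \<rho> (\<lambda>x. f x - g x) = Hnorm \<rho> (\<lambda>x. g x - f x)"
  using Hnorm_uminus[of \<rho> "\<lambda>x. f x - g x"] by simp

lemma Hnorm_diff_scaleR_power2:
  assumes f: "inH \<rho> f" and g: "inH \<rho> g"
  shows "(Hnorm \<rho> (\<lambda>x. f x - s *\<^sub>R g x))\<^sup>2 = (Hnorm \<rho> f)\<^sup>2 - 2 * s * Hinner \<rho> f g + s\<^sup>2 * (Hnorm \<rho> g)\<^sup>2"
proof -
  have "Hinner \<rho> (\<lambda>x. f x - s *\<^sub>R g x) (\<lambda>x. f x - s *\<^sub>R g x)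
      = Hinner \<rho> f f - s * Hinner \<rho> f g - s * (Hinner \<rho> g f - s * Hinner \<rho> g g)"
    using f g by simp
  then show ?thesis
    unfolding Hnorm_power2 by (simp add: Hinner_commute[of \<rho> g f] power2_eq_square algebra_simps)
qed

lemma Hinner_Cauchy_Schwarz:
  assumes f: "inH \<rho> f" and g: "inH \<rho> g"
  shows "\<bar>Hinner \<rho> f g\<bar> \<le> Hnorm \<rho> f * Hnorm \<rho> g"
proof -
  define A B C where "A = Hinner \<rho> f f" and "B = Hinner \<rho> f g" and "C = Hinner \<rho> g g"
  have quadratic: "0 \<le> A - 2 * s * B + s\<^sup>2 * C" for s
    using Hnorm_diff_scaleR_power2[OF f g, of s] zero_le_power2[of "Hnorm \<rho> (\<lambda>x. f x - s *\<^sub>R g x)"]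
    by (simp add: A_def B_def C_def Hnorm_power2)
  have "B\<^sup>2 \<le> A * C"
  proof (cases "C = 0")
    case True
    have "B = 0"
    proof (rule ccontr)
      assume "B \<noteq> 0"
      then have "A - 2 * ((A + 1) / (2 * B)) * B = -1"
        by (simp add: field_simps)
      with quadratic[of "(A + 1) / (2 * B)"] True show False
        by simp
    qed
    with True show ?thesis
      by simp
  next
    case False
    then have "0 < C"
      unfolding C_def by (metis Hnorm_power2 zero_le_power2 order_le_less)
    have "0 \<le> A - 2 * (B / C) * B + (B / C)\<^sup>2 * C"
      by (rule quadratic)
    also have "\<dots> = A - B\<^sup>2 / C"
      using \<open>0 < C\<close> by (simp add: field_simps power2_eq_square)
    finally show ?thesis
      using \<open>0 < C\<close> by (simp add: field_simps)
  qed
  also have "A * C = (Hnorm \<rho> f * Hnorm \<rho> g)\<^sup>2"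
    by (simp add: A_def C_def Hnorm_power2 power_mult_distrib)
  finally have "\<bar>B\<bar>\<^sup>2 \<le> (Hnorm \<rho> f * Hnorm \<rho> g)\<^sup>2"
    by simp
  then show ?thesis
    unfolding B_def by (rule power2_le_imp_le) simp
qed

lemma Hnorm_triangle:
  assumes f: "inH \<rho> f" and g: "inH \<rho> g" and h: "\<And>x. h x = f x + g x"
  shows "Hnorm \<rho> h \<le> Hnorm \<rho> f + Hnorm \<rho> g"
proof -
  have "h = (\<lambda>x. f x + g x)"
    using h by blast
  then have "(Hnorm \<rho> h)\<^sup>2 = (Hnorm \<rho> f)\<^sup>2 + 2 * Hinner \<rho> f g + (Hnorm \<rho> g)\<^sup>2"
    using f g by (simp add: Hnorm_power2 Hinner_commute[of \<rho> g f])
  also have "\<dots> \<le> (Hnorm \<rho> f + Hnorm \<rho> g)\<^sup>2"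
    using Hinner_Cauchy_Schwarz[OF f g] by (simp add: power2_sum)
  finally show ?thesis
    using power2_le_imp_le by simp
qed

lemma Hnorm_triangle3:
  assumes f: "inH \<rho> f" and g: "inH \<rho> g" and h: "inH \<rho> h" and k: "\<And>x. k x = f x + g x + h x"
  shows "Hnorm \<rho> k \<le> Hnorm \<rho> f + Hnorm \<rho> g + Hnorm \<rho> h"
proof -
  have "Hnorm \<rho> k \<le> Hnorm \<rho> (\<lambda>x. f x + g x) + Hnorm \<rho> h"
    using inH_add[OF f g] h k by (rule Hnorm_triangle)
  also have "Hnorm \<rho> (\<lambda>x. f x + g x) \<le> Hnorm \<rho> f + Hnorm \<rho> g"
    using f g by (rule Hnorm_triangle) simp
  finally show ?thesis
    by simp
qed

section \<open>Frechet differentiable \<open>\<lambda>\<close>-convex functionals\<close>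

definition H_continuous_at :: "'a::euclidean_space measure \<Rightarrow> (('a \<Rightarrow> 'a) \<Rightarrow> ('a \<Rightarrow> 'a)) \<Rightarrow> ('a \<Rightarrow> 'a) \<Rightarrow> bool"
  where "H_continuous_at \<rho> G \<xi> \<longleftrightarrow> (\<forall>\<epsilon>>0. \<exists>\<delta>>0. \<forall>\<eta>. inH \<rho> \<eta> \<and> Hnorm \<rho> (\<lambda>x. \<eta> x - \<xi> x) < \<delta> \<longrightarrow>
      Hnorm \<rho> (\<lambda>x. G \<eta> x - G \<xi> x) < \<epsilon>)"

lemma H_gradient_inH: "H_gradient \<rho> F G \<Longrightarrow> inH \<rho> \<xi> \<Longrightarrow> inH \<rho> (G \<xi>)"
  by (simp add: H_gradient_def)

lemma H_gradient_remainderE: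
  assumes "H_gradient \<rho> F G" "inH \<rho> \<xi>" "0 < \<epsilon>"
  obtains \<delta> where "0 < \<delta>"
    "\<And>\<eta>. inH \<rho> \<eta> \<Longrightarrow> Hnorm \<rho> (\<lambda>x. \<eta> x - \<xi> x) < \<delta> \<Longrightarrow>
       \<bar>F \<eta> - F \<xi> - Hinner \<rho> (G \<xi>) (\<lambda>x. \<eta> x - \<xi> x)\<bar> \<le> \<epsilon> * Hnorm \<rho> (\<lambda>x. \<eta> x - \<xi> x)"
  using assms unfolding H_gradient_def by metis

lemma H_lambda_convexD:
  assumes "H_lambda_convex \<rho> lam F" "inH \<rho> \<xi>" "inH \<rho> \<eta>" "0 \<le> s" "s \<le> 1"
  shows "F (\<lambda>x. (1 - s) *\<^sub>R \<xi> x + s *\<^sub>R \<eta> x)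
    \<le> (1 - s) * F \<xi> + s * F \<eta> - lam / 2 * s * (1 - s) * (Hnorm \<rho> (\<lambda>x. \<xi> x - \<eta> x))\<^sup>2"
  using assms unfolding H_lambda_convex_def by blast

lemma H_gradient_directional_derivative:
  assumes grad: "H_gradient \<rho> F G" and \<xi>: "inH \<rho> \<xi>" and v: "inH \<rho> v"
  shows "((\<lambda>s. (F (\<lambda>x. \<xi> x + s *\<^sub>R v x) - F \<xi>) / s) \<longlongrightarrow> Hinner \<rho> (G \<xi>) v) (at_right 0)"
proof (rule tendstoI)
  fix \<epsilon> :: real
  assume "0 < \<epsilon>"
  define n where "n = Hnorm \<rho> v"
  have "0 < \<epsilon> / (n + 1)"
    using \<open>0 < \<epsilon>\<close> by (simp add: n_def add_nonneg_pos)
  then obtain \<delta> where "0 < \<delta>" and remainder: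
    "\<And>\<eta>. inH \<rho> \<eta> \<Longrightarrow> Hnorm \<rho> (\<lambda>x. \<eta> x - \<xi> x) < \<delta> \<Longrightarrow>
       \<bar>F \<eta> - F \<xi> - Hinner \<rho> (G \<xi>) (\<lambda>x. \<eta> x - \<xi> x)\<bar> \<le> \<epsilon> / (n + 1) * Hnorm \<rho> (\<lambda>x. \<eta> x - \<xi> x)"
    using H_gradient_remainderE[OF grad \<xi>] by metis
  have "dist ((F (\<lambda>x. \<xi> x + s *\<^sub>R v x) - F \<xi>) / s) (Hinner \<rho> (G \<xi>) v) < \<epsilon>"
    if "0 < s" "s < \<delta> / (n + 1)" for s
  proof -
    have "s * n \<le> s * (n + 1)"
      using \<open>0 < s\<close> by simp
    also have "\<dots> < \<delta>"
      using that by (simp add: n_def pos_less_divide_eq add_nonneg_pos)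
    finally have remainder_s: "\<bar>F (\<lambda>x. \<xi> x + s *\<^sub>R v x) - F \<xi> - s * Hinner \<rho> (G \<xi>) v\<bar>
        \<le> \<epsilon> / (n + 1) * (s * n)"
      using remainder[of "\<lambda>x. \<xi> x + s *\<^sub>R v x"] \<xi> v \<open>0 < s\<close> by (simp add: Hnorm_scaleR n_def)
    have "F (\<lambda>x. \<xi> x + s *\<^sub>R v x) - F \<xi> - s * Hinner \<rho> (G \<xi>) v
        = s * ((F (\<lambda>x. \<xi> x + s *\<^sub>R v x) - F \<xi>) / s - Hinner \<rho> (G \<xi>) v)"
      using \<open>0 < s\<close> by (simp add: field_simps)
    then have "s * \<bar>(F (\<lambda>x. \<xi> x + s *\<^sub>R v x) - F \<xi>) / s - Hinner \<rho> (G \<xi>) v\<bar>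
        = \<bar>F (\<lambda>x. \<xi> x + s *\<^sub>R v x) - F \<xi> - s * Hinner \<rho> (G \<xi>) v\<bar>"
      using \<open>0 < s\<close> by (simp add: abs_mult)
    also have "\<dots> \<le> s * (\<epsilon> / (n + 1) * n)"
      using remainder_s by (simp add: ac_simps)
    finally have "\<bar>(F (\<lambda>x. \<xi> x + s *\<^sub>R v x) - F \<xi>) / s - Hinner \<rho> (G \<xi>) v\<bar> \<le> \<epsilon> / (n + 1) * n"
      using \<open>0 < s\<close> by (simp only: mult_le_cancel_left_pos)
    also have "\<dots> = \<epsilon> * (n / (n + 1))"
      by simp
    also have "\<dots> < \<epsilon> * 1"
      using \<open>0 < \<epsilon>\<close> by (intro mult_strict_left_mono) (simp_all add: n_def add_nonneg_pos divide_less_eq)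
    finally show ?thesis
      by (simp add: dist_real_def)
  qed
  moreover have "0 < \<delta> / (n + 1)"
    using \<open>0 < \<delta>\<close> by (simp add: n_def add_nonneg_pos)
  ultimately show "eventually (\<lambda>s. dist ((F (\<lambda>x. \<xi> x + s *\<^sub>R v x) - F \<xi>) / s) (Hinner \<rho> (G \<xi>) v) < \<epsilon>)
      (at_right 0)"
    unfolding eventually_at_right_field by blast
qed

lemma lambda_convex_gradient_inequality:
  assumes grad: "H_gradient \<rho> F G" and convex: "H_lambda_convex \<rho> lam F"
    and \<xi>: "inH \<rho> \<xi>" and \<eta>: "inH \<rho> \<eta>"
  shows "F \<xi> + Hinner \<rho> (G \<xi>) (\<lambda>x. \<eta> x - \<xi> x) + lam / 2 * (Hnorm \<rho> (\<lambda>x. \<eta> x - \<xi> x))\<^sup>2 \<le> F \<eta>"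
proof -
  define v d where "v = (\<lambda>x. \<eta> x - \<xi> x)" and "d = Hnorm \<rho> v"
  have secant: "(F (\<lambda>x. \<xi> x + s *\<^sub>R v x) - F \<xi>) / s \<le> F \<eta> - F \<xi> - lam / 2 * (1 - s) * d\<^sup>2"
    if "0 < s" "s < 1" for s
  proof -
    have "(\<lambda>x. \<xi> x + s *\<^sub>R v x) = (\<lambda>x. (1 - s) *\<^sub>R \<xi> x + s *\<^sub>R \<eta> x)"
      by (simp add: v_def algebra_simps)
    then have "F (\<lambda>x. \<xi> x + s *\<^sub>R v x) - F \<xi> \<le> s * (F \<eta> - F \<xi> - lam / 2 * (1 - s) * d\<^sup>2)"
      using H_lambda_convexD[OF convex \<xi> \<eta>, of s] that
      by (simp add: d_def v_def Hnorm_minus_commute[of \<rho> \<xi>] algebra_simps)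
    with \<open>0 < s\<close> show ?thesis
      by (simp add: divide_le_eq mult.commute)
  qed
  have quotient: "((\<lambda>s. (F (\<lambda>x. \<xi> x + s *\<^sub>R v x) - F \<xi>) / s) \<longlongrightarrow> Hinner \<rho> (G \<xi>) v) (at_right 0)"
    using \<xi> \<eta> by (intro H_gradient_directional_derivative[OF grad]) (simp_all add: v_def)
  have bound: "((\<lambda>s. F \<eta> - F \<xi> - lam / 2 * (1 - s) * d\<^sup>2) \<longlongrightarrow> F \<eta> - F \<xi> - lam / 2 * (1 - 0) * d\<^sup>2)
      (at_right 0)"
    by (intro tendsto_intros)
  have "eventually (\<lambda>s. 0 < s \<and> s < 1) (at_right (0::real))"
    unfolding eventually_at_right_field by (intro exI[of _ 1]) simp
  then have "eventually (\<lambda>s. (F (\<lambda>x. \<xi> x + s *\<^sub>R v x) - F \<xi>) / s \<le> F \<eta> - F \<xi> - lam / 2 * (1 - s) * d\<^sup>2)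
      (at_right 0)"
    by (rule eventually_mono) (use secant in blast)
  with trivial_limit_at_right_real bound quotient
  have "Hinner \<rho> (G \<xi>) v \<le> F \<eta> - F \<xi> - lam / 2 * (1 - 0) * d\<^sup>2"
    by (rule tendsto_le)
  then show ?thesis
    by (simp add: v_def d_def)
qed

lemma lambda_convex_gradient_three_point:
  assumes grad: "H_gradient \<rho> F G" and convex: "H_lambda_convex \<rho> lam F"
    and x: "inH \<rho> x" and y: "inH \<rho> y" and z: "inH \<rho> z"
  shows "Hinner \<rho> (\<lambda>w. G y w - G x w) (\<lambda>w. z w - x w)
    \<le> F z - F x - Hinner \<rho> (G x) (\<lambda>w. z w - x w) + Hinner \<rho> (\<lambda>w. G y w - G x w) (\<lambda>w. y w - x w)
       - lam / 2 * ((Hnorm \<rho> (\<lambda>w. z w - y w))\<^sup>2 + (Hnorm \<rho> (\<lambda>w. y w - x w))\<^sup>2)"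
proof -
  have Gx: "inH \<rho> (G x)" and Gy: "inH \<rho> (G y)"
    using H_gradient_inH[OF grad] x y by blast+
  have "F y + Hinner \<rho> (G y) (\<lambda>w. z w - y w) + lam / 2 * (Hnorm \<rho> (\<lambda>w. z w - y w))\<^sup>2 \<le> F z"
    and "F x + Hinner \<rho> (G x) (\<lambda>w. y w - x w) + lam / 2 * (Hnorm \<rho> (\<lambda>w. y w - x w))\<^sup>2 \<le> F y"
    using lambda_convex_gradient_inequality[OF grad convex] x y z by blast+
  moreover have "Hinner \<rho> (\<lambda>w. G y w - G x w) (\<lambda>w. z w - x w) - Hinner \<rho> (\<lambda>w. G y w - G x w) (\<lambda>w. y w - x w)
      + Hinner \<rho> (G x) (\<lambda>w. z w - x w) = Hinner \<rho> (G y) (\<lambda>w. z w - y w) + Hinner \<rho> (G x) (\<lambda>w. y w - x w)"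
    using x y z Gx Gy by simp
  ultimately show ?thesis
    by (simp add: algebra_simps)
qed

lemma lambda_convex_gradient_local_bound:
  assumes grad: "H_gradient \<rho> F G" and convex: "H_lambda_convex \<rho> lam F"
    and x: "inH \<rho> x" and y: "inH \<rho> y" and "0 < r" and "0 \<le> \<eta>"
    and remainder: "\<And>z. inH \<rho> z \<Longrightarrow> Hnorm \<rho> (\<lambda>w. z w - x w) \<le> r \<Longrightarrow>
      F z - F x - Hinner \<rho> (G x) (\<lambda>w. z w - x w) \<le> \<eta> * r"
    and close: "Hnorm \<rho> (\<lambda>w. y w - x w) \<le> r / 2"
  shows "Hnorm \<rho> (\<lambda>w. G y w - G x w) \<le> 2 * \<eta> + 5 / 2 * (\<bar>lam\<bar> * r)"
proof -
  define e d D where "e = Hnorm \<rho> (\<lambda>w. y w - x w)" and "d = (\<lambda>w. G y w - G x w)" and "D = Hnorm \<rho> d"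
  have d: "inH \<rho> d"
    using H_gradient_inH[OF grad] x y by (simp add: d_def)
  show ?thesis
  proof (cases "D = 0")
    case True
    have "0 \<le> \<bar>lam\<bar> * r"
      using \<open>0 < r\<close> by simp
    with True \<open>0 \<le> \<eta>\<close> show ?thesis
      by (simp add: D_def d_def)
  next
    case False
    then have "0 < D"
      by (simp add: D_def order_less_le)
    \<comment> \<open>Test the three-point inequality in the direction of \<open>G y - G x\<close>, at distance \<open>r\<close> from \<open>x\<close>.\<close>
    define z where "z = (\<lambda>w. x w + (r / D) *\<^sub>R d w)"
    have z: "inH \<rho> z"
      using x d by (simp add: z_def)
    have zx: "(\<lambda>w. z w - x w) = (\<lambda>w. (r / D) *\<^sub>R d w)"
      by (simp add: z_def)
    have "Hnorm \<rho> (\<lambda>w. z w - x w) = r"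
      using \<open>0 < r\<close> \<open>0 < D\<close> by (simp add: zx Hnorm_scaleR D_def)
    then have "F z - F x - Hinner \<rho> (G x) (\<lambda>w. z w - x w) \<le> \<eta> * r"
      using remainder[OF z] by simp
    moreover have "Hinner \<rho> d (\<lambda>w. z w - x w) = r * D"
      using \<open>0 < D\<close> by (simp add: zx D_def Hnorm_power2[symmetric] power2_eq_square)
    moreover have "Hinner \<rho> d (\<lambda>w. y w - x w) \<le> D * (r / 2)"
    proof -
      have "Hinner \<rho> d (\<lambda>w. y w - x w) \<le> D * e"
        using Hinner_Cauchy_Schwarz[OF d, of "\<lambda>w. y w - x w"] x y by (simp add: D_def e_def)
      also have "\<dots> \<le> D * (r / 2)"
        using \<open>0 < D\<close> close by (simp add: e_def)
      finally show ?thesis .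
    qed
    moreover have "- lam / 2 * ((Hnorm \<rho> (\<lambda>w. z w - y w))\<^sup>2 + e\<^sup>2) \<le> 5 / 4 * \<bar>lam\<bar> * r\<^sup>2"
    proof -
      have "Hnorm \<rho> (\<lambda>w. z w - y w) \<le> Hnorm \<rho> (\<lambda>w. z w - x w) + Hnorm \<rho> (\<lambda>w. x w - y w)"
        using x y z by (intro Hnorm_triangle) auto
      then have "Hnorm \<rho> (\<lambda>w. z w - y w) \<le> 3 / 2 * r"
        using \<open>Hnorm \<rho> (\<lambda>w. z w - x w) = r\<close> close by (simp add: Hnorm_minus_commute[of \<rho> x])
      then have "(Hnorm \<rho> (\<lambda>w. z w - y w))\<^sup>2 + e\<^sup>2 \<le> (3 / 2 * r)\<^sup>2 + (r / 2)\<^sup>2"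
        using close by (intro add_mono power_mono) (simp_all add: e_def)
      then have S: "(Hnorm \<rho> (\<lambda>w. z w - y w))\<^sup>2 + e\<^sup>2 \<le> 5 / 2 * r\<^sup>2"
        by (simp add: power2_eq_square algebra_simps)
      have "- lam / 2 * ((Hnorm \<rho> (\<lambda>w. z w - y w))\<^sup>2 + e\<^sup>2) \<le> \<bar>lam\<bar> / 2 * ((Hnorm \<rho> (\<lambda>w. z w - y w))\<^sup>2 + e\<^sup>2)"
        by (intro mult_right_mono) auto
      also have "\<dots> \<le> \<bar>lam\<bar> / 2 * (5 / 2 * r\<^sup>2)"
        using S by (intro mult_left_mono) auto
      finally show ?thesis
        by simp
    qed
    ultimately have "r * D \<le> \<eta> * r + D * (r / 2) + 5 / 4 * \<bar>lam\<bar> * r\<^sup>2"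
      using lambda_convex_gradient_three_point[OF grad convex x y z] by (simp add: d_def e_def)
    then have "r * (D / 2) \<le> r * (\<eta> + 5 / 4 * (\<bar>lam\<bar> * r))"
      by (simp add: power2_eq_square algebra_simps)
    then have "D / 2 \<le> \<eta> + 5 / 4 * (\<bar>lam\<bar> * r)"
      using \<open>0 < r\<close> by (simp only: mult_le_cancel_left_pos)
    then show ?thesis
      unfolding D_def d_def by linarith
  qed
qed

lemma lambda_convex_gradient_continuous:
  assumes grad: "H_gradient \<rho> F G" and convex: "H_lambda_convex \<rho> lam F" and x: "inH \<rho> x"
  shows "H_continuous_at \<rho> G x"
  unfolding H_continuous_at_def
proof (intro allI impI)
  fix \<epsilon> :: real
  assume "0 < \<epsilon>"
  then obtain \<delta> where "0 < \<delta>" and remainder: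
    "\<And>z. inH \<rho> z \<Longrightarrow> Hnorm \<rho> (\<lambda>w. z w - x w) < \<delta> \<Longrightarrow>
       \<bar>F z - F x - Hinner \<rho> (G x) (\<lambda>w. z w - x w)\<bar> \<le> \<epsilon> / 4 * Hnorm \<rho> (\<lambda>w. z w - x w)"
    using H_gradient_remainderE[OF grad x, of "\<epsilon> / 4"] by auto
  define r where "r = min (\<delta> / 2) (\<epsilon> / (10 * \<bar>lam\<bar> + 1))"
  have "0 < r" "r < \<delta>"
    using \<open>0 < \<epsilon>\<close> \<open>0 < \<delta>\<close> by (auto simp: r_def add_nonneg_pos)
  have "\<bar>lam\<bar> * r \<le> \<epsilon> / 10"
  proof -
    have "r * (10 * \<bar>lam\<bar> + 1) \<le> \<epsilon>"
      unfolding r_def by (simp add: add_nonneg_pos min_le_iff_disj pos_le_divide_eq[symmetric])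
    with \<open>0 < r\<close> show ?thesis
      by (simp add: algebra_simps)
  qed
  have "Hnorm \<rho> (\<lambda>w. G y w - G x w) < \<epsilon>" if y: "inH \<rho> y" and "Hnorm \<rho> (\<lambda>w. y w - x w) < r / 2" for y
  proof -
    have "F z - F x - Hinner \<rho> (G x) (\<lambda>w. z w - x w) \<le> \<epsilon> / 4 * r"
      if "inH \<rho> z" "Hnorm \<rho> (\<lambda>w. z w - x w) \<le> r" for z
    proof -
      have "\<bar>F z - F x - Hinner \<rho> (G x) (\<lambda>w. z w - x w)\<bar> \<le> \<epsilon> / 4 * Hnorm \<rho> (\<lambda>w. z w - x w)"
        using remainder[OF that(1)] that(2) \<open>r < \<delta>\<close> by simp
      then have "F z - F x - Hinner \<rho> (G x) (\<lambda>w. z w - x w) \<le> \<epsilon> / 4 * Hnorm \<rho> (\<lambda>w. z w - x w)"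
        by (rule abs_le_D1)
      also have "\<dots> \<le> \<epsilon> / 4 * r"
        using that(2) \<open>0 < \<epsilon>\<close> by simp
      finally show ?thesis .
    qed
    then have "Hnorm \<rho> (\<lambda>w. G y w - G x w) \<le> 2 * (\<epsilon> / 4) + 5 / 2 * (\<bar>lam\<bar> * r)"
      using \<open>0 < r\<close> \<open>0 < \<epsilon>\<close> \<open>Hnorm \<rho> (\<lambda>w. y w - x w) < r / 2\<close>
      by (intro lambda_convex_gradient_local_bound[OF grad convex x y]) simp_all
    with \<open>\<bar>lam\<bar> * r \<le> \<epsilon> / 10\<close> \<open>0 < \<epsilon>\<close> show ?thesis
      by linarith
  qed
  with \<open>0 < r\<close> show "\<exists>\<delta>'>0. \<forall>y. inH \<rho> y \<and> Hnorm \<rho> (\<lambda>w. y w - x w) < \<delta>' \<longrightarrow>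
      Hnorm \<rho> (\<lambda>w. G y w - G x w) < \<epsilon>"
    by (intro exI[of _ "r / 2"]) auto
qed

section \<open>The scheme\<close>

lemma scheme_fun_descent:
  assumes grad: "H_gradient \<rho> F G" and "0 < \<tau>" and Z: "inH \<rho> Z" and Y: "inH \<rho> Y"
    and "0 < Hnorm \<rho> (\<lambda>x. G Y x + G Z x + (2 / \<tau>) *\<^sub>R (Y x - Z x))"
  shows "\<exists>\<xi>. inH \<rho> \<xi> \<and> scheme_fun \<rho> F G \<tau> Z \<xi> < scheme_fun \<rho> F G \<tau> Z Y"
proof -
  have GY: "inH \<rho> (G Y)" and GZ: "inH \<rho> (G Z)"
    using H_gradient_inH[OF grad] Y Z by blast+
  \<comment> \<open>\<open>W / 2\<close> is the gradient of \<open>scheme_fun \<rho> F G \<tau> Z\<close> at \<open>Y\<close>; we step against it.\<close>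
  define W N where "W = (\<lambda>x. G Y x + G Z x + (2 / \<tau>) *\<^sub>R (Y x - Z x))" and "N = Hnorm \<rho> W"
  have W: "inH \<rho> W" and "0 < N"
    using Y Z GY GZ \<open>0 < Hnorm \<rho> _\<close> by (simp_all add: W_def N_def)
  obtain \<delta> where "0 < \<delta>" and remainder:
    "\<And>\<xi>. inH \<rho> \<xi> \<Longrightarrow> Hnorm \<rho> (\<lambda>x. \<xi> x - Y x) < \<delta> \<Longrightarrow>
       \<bar>F \<xi> - F Y - Hinner \<rho> (G Y) (\<lambda>x. \<xi> x - Y x)\<bar> \<le> N / 4 * Hnorm \<rho> (\<lambda>x. \<xi> x - Y x)"
    using H_gradient_remainderE[OF grad Y, of "N / 4"] \<open>0 < N\<close> by auto
  define s where "s = min (\<tau> / 4) (\<delta> / (2 * N))"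
  have "0 < s" "s \<le> \<tau> / 4" "s \<le> \<delta> / (2 * N)"
    using \<open>0 < \<tau>\<close> \<open>0 < \<delta>\<close> \<open>0 < N\<close> by (simp_all add: s_def)
  then have "s * N < \<delta>"
    using \<open>0 < N\<close> \<open>0 < \<delta>\<close> by (simp add: field_simps)
  define \<xi> P Q R where "\<xi> = (\<lambda>x. Y x - s *\<^sub>R W x)" and "P = Hinner \<rho> (G Y) W"
    and "Q = Hinner \<rho> (G Z) W" and "R = Hinner \<rho> (\<lambda>x. Y x - Z x) W"
  have \<xi>: "inH \<rho> \<xi>"
    using Y W by (simp add: \<xi>_def)
  have \<xi>Y: "(\<lambda>x. \<xi> x - Y x) = (\<lambda>x. (- s) *\<^sub>R W x)"
    by (simp add: \<xi>_def)
  have "Hnorm \<rho> (\<lambda>x. \<xi> x - Y x) = s * N" "Hinner \<rho> (G Y) (\<lambda>x. \<xi> x - Y x) = - (s * P)"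
    using \<open>0 < s\<close> by (simp_all only: \<xi>Y Hnorm_scaleR N_def abs_minus_cancel abs_of_pos
        Hinner_scaleR_right P_def mult_minus_left)
  then have "\<bar>F \<xi> - F Y - - (s * P)\<bar> \<le> N / 4 * (s * N)"
    using remainder[OF \<xi>] \<open>s * N < \<delta>\<close> by metis
  then have F_step: "F \<xi> \<le> F Y - s * P + N / 4 * (s * N)"
    by linarith
  have inner_step: "Hinner \<rho> (G Z) \<xi> = Hinner \<rho> (G Z) Y - s * Q"
    using Y W GZ by (simp add: \<xi>_def Q_def)
  have "(\<lambda>x. \<xi> x - Z x) = (\<lambda>x. (Y x - Z x) - s *\<^sub>R W x)"
    by (simp add: \<xi>_def algebra_simps)
  then have "(Hnorm \<rho> (\<lambda>x. \<xi> x - Z x))\<^sup>2 = (Hnorm \<rho> (\<lambda>x. Y x - Z x))\<^sup>2 - 2 * s * R + s\<^sup>2 * N\<^sup>2"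
    using Hnorm_diff_scaleR_power2[of \<rho> "\<lambda>x. Y x - Z x" W s] Y Z W by (simp add: R_def N_def)
  then have norm_step: "(Hnorm \<rho> (\<lambda>x. \<xi> x - Z x))\<^sup>2 / (2 * \<tau>)
      = (Hnorm \<rho> (\<lambda>x. Y x - Z x))\<^sup>2 / (2 * \<tau>) - s * R / \<tau> + s * N\<^sup>2 / 2 * (s / \<tau>)"
    using \<open>0 < \<tau>\<close> by (simp add: field_simps power2_eq_square)
  have "N\<^sup>2 = Hinner \<rho> (\<lambda>x. G Y x + G Z x + (2 / \<tau>) *\<^sub>R (Y x - Z x)) W"
    by (simp only: N_def Hnorm_power2 W_def)
  also have "\<dots> = P + Q + 2 / \<tau> * R"
    using Y Z GY GZ W by (simp add: P_def Q_def R_def)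
  finally have gradient: "s * P + s * Q + 2 * (s * R / \<tau>) = s * N\<^sup>2"
    by (simp add: algebra_simps)
  have "s / \<tau> \<le> 1 / 4"
    using \<open>s \<le> \<tau> / 4\<close> \<open>0 < \<tau>\<close> by (simp add: field_simps)
  then have "s * N\<^sup>2 / 2 * (s / \<tau>) \<le> s * N\<^sup>2 / 2 * (1 / 4)"
    using \<open>0 < s\<close> by (intro mult_left_mono) simp_all
  moreover have "N / 4 * (s * N) = s * N\<^sup>2 / 4" "0 < s * N\<^sup>2"
    using \<open>0 < s\<close> \<open>0 < N\<close> by (simp_all add: power2_eq_square)
  ultimately have "scheme_fun \<rho> F G \<tau> Z \<xi> < scheme_fun \<rho> F G \<tau> Z Y"
    using F_step inner_step norm_step gradient unfolding scheme_fun_def by linarith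
  with \<xi> show ?thesis
    by blast
qed

lemma scheme_euler_lagrange:
  assumes grad: "H_gradient \<rho> F G" and "0 < \<tau>" and Z: "inH \<rho> Z" and Y: "inH \<rho> Y"
    and minimal: "\<And>\<xi>. inH \<rho> \<xi> \<Longrightarrow> scheme_fun \<rho> F G \<tau> Z Y \<le> scheme_fun \<rho> F G \<tau> Z \<xi>"
  shows "Hnorm \<rho> (\<lambda>x. Y x - Z x + (\<tau> / 2) *\<^sub>R (G Y x + G Z x)) = 0"
proof -
  define W where "W = (\<lambda>x. G Y x + G Z x + (2 / \<tau>) *\<^sub>R (Y x - Z x))"
  have "\<not> 0 < Hnorm \<rho> W"
    using scheme_fun_descent[OF grad \<open>0 < \<tau>\<close> Z Y] minimal by (force simp: W_def)
  then have "Hnorm \<rho> W = 0"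
    using Hnorm_nonneg[of \<rho> W] by linarith
  moreover have "(\<lambda>x. Y x - Z x + (\<tau> / 2) *\<^sub>R (G Y x + G Z x)) = (\<lambda>x. (\<tau> / 2) *\<^sub>R W x)"
    using \<open>0 < \<tau>\<close> by (simp add: W_def algebra_simps)
  ultimately show ?thesis
    using \<open>0 < \<tau>\<close> by (simp add: Hnorm_scaleR)
qed

lemma scheme_increment_estimate:
  fixes Y :: "nat \<Rightarrow> 'a::euclidean_space \<Rightarrow> 'a"
  assumes Y: "\<And>n. inH \<rho> (Y n)" and GY: "\<And>n. inH \<rho> (G (Y n))" and g: "inH \<rho> g" and "0 \<le> \<tau>"
    and euler: "\<And>n. Hnorm \<rho> (\<lambda>x. Y (Suc n) x - Y n x + (\<tau> / 2) *\<^sub>R (G (Y (Suc n)) x + G (Y n) x)) = 0"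
    and bound: "\<And>j. m \<le> j \<Longrightarrow> j \<le> m + k \<Longrightarrow> Hnorm \<rho> (\<lambda>x. G (Y j) x - g x) \<le> c"
  shows "Hnorm \<rho> (\<lambda>x. Y (m + k) x - Y m x + (real k * \<tau>) *\<^sub>R g x) \<le> real k * \<tau> * c"
  using bound
proof (induction k)
  case 0
  then show ?case
    by (simp add: Hnorm_def)
next
  case (Suc k)
  define S where "S = (\<lambda>x. Y (m + k) x - Y m x + (real k * \<tau>) *\<^sub>R g x)"
  define E where "E = (\<lambda>x. Y (Suc (m + k)) x - Y (m + k) x
    + (\<tau> / 2) *\<^sub>R (G (Y (Suc (m + k))) x + G (Y (m + k)) x))"
  define R where "R = (\<lambda>x. (G (Y (Suc (m + k))) x - g x) + (G (Y (m + k)) x - g x))"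
  have S: "inH \<rho> S" and E: "inH \<rho> E" and R: "inH \<rho> R"
    using Y GY g by (simp_all add: S_def E_def R_def)
  have "Hnorm \<rho> (\<lambda>x. Y (m + Suc k) x - Y m x + (real (Suc k) * \<tau>) *\<^sub>R g x)
      \<le> Hnorm \<rho> S + Hnorm \<rho> E + Hnorm \<rho> (\<lambda>x. - ((\<tau> / 2) *\<^sub>R R x))"
  proof (rule Hnorm_triangle3[OF S E inH_uminus[OF inH_scaleR[OF R]]])
    show "Y (m + Suc k) x - Y m x + (real (Suc k) * \<tau>) *\<^sub>R g x = S x + E x + - ((\<tau> / 2) *\<^sub>R R x)" for x
      by (simp add: S_def E_def R_def algebra_simps) (simp flip: scaleR_add_left)
  qed
  also have "Hnorm \<rho> E = 0"
    unfolding E_def by (rule euler)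
  also have "Hnorm \<rho> S \<le> real k * \<tau> * c"
    unfolding S_def using Suc by simp
  also have "Hnorm \<rho> (\<lambda>x. - ((\<tau> / 2) *\<^sub>R R x)) \<le> \<tau> / 2 * (c + c)"
  proof -
    have "Hnorm \<rho> R \<le> Hnorm \<rho> (\<lambda>x. G (Y (Suc (m + k))) x - g x) + Hnorm \<rho> (\<lambda>x. G (Y (m + k)) x - g x)"
      using GY g by (intro Hnorm_triangle) (simp_all add: R_def)
    also have "\<dots> \<le> c + c"
      using Suc.prems by (intro add_mono) simp_all
    finally have "\<tau> / 2 * Hnorm \<rho> R \<le> \<tau> / 2 * (c + c)"
      using \<open>0 \<le> \<tau>\<close> by (intro mult_left_mono) simp_all
    then have "\<bar>\<tau> / 2\<bar> * Hnorm \<rho> R \<le> \<tau> / 2 * (c + c)"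
      using \<open>0 \<le> \<tau>\<close> by simp
    then show ?thesis
      by (simp only: Hnorm_uminus Hnorm_scaleR)
  qed
  finally show ?case
    by (simp add: algebra_simps)
qed

lemma interp_grid_index:
  assumes "0 < \<tau>" "0 \<le> t"
  shows "real (nat \<lfloor>t / \<tau>\<rfloor>) * \<tau> \<le> t" "t < real (Suc (nat \<lfloor>t / \<tau>\<rfloor>)) * \<tau>"
proof -
  have "real (nat \<lfloor>t / \<tau>\<rfloor>) = of_int \<lfloor>t / \<tau>\<rfloor>"
    using assms by simp
  moreover have "of_int \<lfloor>t / \<tau>\<rfloor> * \<tau> \<le> t"
    using of_int_floor_le[of "t / \<tau>"] by (simp add: pos_le_divide_eq[OF \<open>0 < \<tau>\<close>])
  moreover have "t < (of_int \<lfloor>t / \<tau>\<rfloor> + 1) * \<tau>"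
    using real_of_int_floor_add_one_gt[of "t / \<tau>"] pos_divide_less_eq[OF \<open>0 < \<tau>\<close>] by blast
  ultimately show "real (nat \<lfloor>t / \<tau>\<rfloor>) * \<tau> \<le> t" "t < real (Suc (nat \<lfloor>t / \<tau>\<rfloor>)) * \<tau>"
    by (simp_all add: ac_simps)
qed

lemma interp_increment_estimate:
  fixes Y :: "nat \<Rightarrow> 'a::euclidean_space \<Rightarrow> 'a"
  assumes Y: "\<And>n. inH \<rho> (Y n)" and GY: "\<And>n. inH \<rho> (G (Y n))" and g: "inH \<rho> g" and "0 < \<tau>"
    and euler: "\<And>n. Hnorm \<rho> (\<lambda>x. Y (Suc n) x - Y n x + (\<tau> / 2) *\<^sub>R (G (Y (Suc n)) x + G (Y n) x)) = 0"
    and "0 \<le> a" "a \<le> b"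
    and bound: "\<And>j. a < real (Suc j) * \<tau> \<Longrightarrow> real j * \<tau> \<le> b \<Longrightarrow> Hnorm \<rho> (\<lambda>x. G (Y j) x - g x) \<le> c"
  shows "Hnorm \<rho> (\<lambda>x. interp \<tau> Y b x - interp \<tau> Y a x + (b - a) *\<^sub>R g x)
    \<le> (b - a) * c + \<tau> * (c + Hnorm \<rho> g)"
proof -
  define m M where "m = nat \<lfloor>a / \<tau>\<rfloor>" and "M = nat \<lfloor>b / \<tau>\<rfloor>"
  have m: "real m * \<tau> \<le> a" "a < real (Suc m) * \<tau>" and M: "real M * \<tau> \<le> b" "b < real (Suc M) * \<tau>"
    using interp_grid_index[OF \<open>0 < \<tau>\<close>] \<open>0 \<le> a\<close> \<open>a \<le> b\<close> unfolding m_def M_def by auto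
  have "m \<le> M"
    unfolding m_def M_def using \<open>0 < \<tau>\<close> \<open>a \<le> b\<close> by (intro nat_mono floor_mono divide_right_mono) auto
  have bound': "Hnorm \<rho> (\<lambda>x. G (Y j) x - g x) \<le> c" if "m \<le> j" "j \<le> m + (M - m)" for j
  proof (rule bound)
    have "real (Suc m) * \<tau> \<le> real (Suc j) * \<tau>"
      using \<open>m \<le> j\<close> \<open>0 < \<tau>\<close> by (intro mult_right_mono) simp_all
    with m(2) show "a < real (Suc j) * \<tau>"
      by linarith
    have "real j * \<tau> \<le> real M * \<tau>"
      using that \<open>m \<le> M\<close> \<open>0 < \<tau>\<close> by (intro mult_right_mono) simp_all
    with M(1) show "real j * \<tau> \<le> b"
      by linarith
  qed
  have "Hnorm \<rho> (\<lambda>x. G (Y m) x - g x) \<le> c"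
    by (rule bound') simp_all
  then have "0 \<le> c"
    using Hnorm_nonneg order_trans by blast
  define D where "D = real (M - m) * \<tau>"
  have "D = real M * \<tau> - real m * \<tau>"
    using \<open>m \<le> M\<close> by (simp add: D_def of_nat_diff left_diff_distrib)
  then have "\<bar>(b - a) - D\<bar> \<le> \<tau>" and "D \<le> b - a + \<tau>"
    using m M by (simp_all add: abs_le_iff distrib_right)
  have "Hnorm \<rho> (\<lambda>x. interp \<tau> Y b x - interp \<tau> Y a x + (b - a) *\<^sub>R g x)
      \<le> Hnorm \<rho> (\<lambda>x. Y M x - Y m x + D *\<^sub>R g x) + Hnorm \<rho> (\<lambda>x. ((b - a) - D) *\<^sub>R g x)"
  proof (rule Hnorm_triangle)
    show "inH \<rho> (\<lambda>x. Y M x - Y m x + D *\<^sub>R g x)" "inH \<rho> (\<lambda>x. ((b - a) - D) *\<^sub>R g x)"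
      using Y g by simp_all
    have "interp \<tau> Y a = Y m" "interp \<tau> Y b = Y M"
      by (simp_all add: interp_def m_def M_def)
    then show "interp \<tau> Y b x - interp \<tau> Y a x + (b - a) *\<^sub>R g x
        = (Y M x - Y m x + D *\<^sub>R g x) + ((b - a) - D) *\<^sub>R g x" for x
      by (simp add: algebra_simps)
  qed
  also have "\<dots> \<le> D * c + \<tau> * Hnorm \<rho> g"
  proof (rule add_mono)
    show "Hnorm \<rho> (\<lambda>x. Y M x - Y m x + D *\<^sub>R g x) \<le> D * c"
      using scheme_increment_estimate[where Y = Y and G = G and \<tau> = \<tau> and m = m and k = "M - m",
          OF Y GY g _ euler bound'] \<open>0 < \<tau>\<close> \<open>m \<le> M\<close>
      by (simp add: D_def)
    show "Hnorm \<rho> (\<lambda>x. ((b - a) - D) *\<^sub>R g x) \<le> \<tau> * Hnorm \<rho> g"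
      unfolding Hnorm_scaleR using \<open>\<bar>(b - a) - D\<bar> \<le> \<tau>\<close> by (rule mult_right_mono) simp
  qed
  also have "\<dots> \<le> (b - a) * c + \<tau> * (c + Hnorm \<rho> g)"
    using mult_right_mono[OF \<open>D \<le> b - a + \<tau>\<close> \<open>0 \<le> c\<close>] by (simp add: algebra_simps)
  finally show ?thesis .
qed

lemma interp_grid_point_near:
  assumes "0 < \<tau>" and X: "\<And>s. 0 \<le> s \<Longrightarrow> inH \<rho> (X s)" and Y: "inH \<rho> (Y j)"
    and close: "\<And>s. s \<in> {0..T} \<Longrightarrow> Hnorm \<rho> (\<lambda>x. interp \<tau> Y s x - X s x) < \<beta>"
    and lip: "\<And>s s'. s \<in> {0..T} \<Longrightarrow> s' \<in> {0..T} \<Longrightarrow> Hnorm \<rho> (\<lambda>x. X s x - X s' x) \<le> L * \<bar>s - s'\<bar>"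
    and s: "real j * \<tau> \<in> {0..T}" and t: "t \<in> {0..T}"
  shows "Hnorm \<rho> (\<lambda>x. Y j x - X t x) < \<beta> + L * \<bar>real j * \<tau> - t\<bar>"
proof -
  define s where "s = real j * \<tau>"
  have "s \<in> {0..T}"
    using \<open>real j * \<tau> \<in> {0..T}\<close> by (simp add: s_def)
  have "interp \<tau> Y s = Y j"
    using \<open>0 < \<tau>\<close> by (simp add: interp_def s_def)
  have "Hnorm \<rho> (\<lambda>x. Y j x - X t x) \<le> Hnorm \<rho> (\<lambda>x. Y j x - X s x) + Hnorm \<rho> (\<lambda>x. X s x - X t x)"
    using Y X \<open>s \<in> {0..T}\<close> t by (intro Hnorm_triangle) simp_all
  also have "\<dots> < \<beta> + L * \<bar>s - t\<bar>"
    using close[OF \<open>s \<in> {0..T}\<close>] lip[OF \<open>s \<in> {0..T}\<close> t] \<open>interp \<tau> Y s = Y j\<close> by simp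
  finally show ?thesis
    by (simp add: s_def)
qed

section \<open>The limit curve\<close>

lemma scheme_increment_near_limit:
  fixes Y :: "nat \<Rightarrow> 'a::euclidean_space \<Rightarrow> 'a" and X :: "real \<Rightarrow> 'a \<Rightarrow> 'a"
  assumes "0 < \<tau>" and Y: "\<And>n. inH \<rho> (Y n)" and G: "\<And>\<xi>. inH \<rho> \<xi> \<Longrightarrow> inH \<rho> (G \<xi>)"
    and euler: "\<And>n. Hnorm \<rho> (\<lambda>x. Y (Suc n) x - Y n x + (\<tau> / 2) *\<^sub>R (G (Y (Suc n)) x + G (Y n) x)) = 0"
    and X: "\<And>s. 0 \<le> s \<Longrightarrow> inH \<rho> (X s)"
    and close: "\<And>s. s \<in> {0..T} \<Longrightarrow> Hnorm \<rho> (\<lambda>x. interp \<tau> Y s x - X s x) < \<beta>"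
    and lip: "\<And>s s'. s \<in> {0..T} \<Longrightarrow> s' \<in> {0..T} \<Longrightarrow> Hnorm \<rho> (\<lambda>x. X s x - X s' x) \<le> L * \<bar>s - s'\<bar>"
    and near: "\<And>\<eta>. inH \<rho> \<eta> \<Longrightarrow> Hnorm \<rho> (\<lambda>x. \<eta> x - X t x) < \<beta> + L * (2 * h) \<Longrightarrow>
      Hnorm \<rho> (\<lambda>x. G \<eta> x - G (X t) x) \<le> \<epsilon>"
    and "0 \<le> L" "\<tau> < h" "0 \<le> t - 2 * h" "t + h \<le> T" "t - h \<le> a" "a \<le> b" "b \<le> t + h"
  shows "Hnorm \<rho> (\<lambda>x. X b x - X a x + (b - a) *\<^sub>R G (X t) x)
    \<le> 2 * \<beta> + (b - a) * \<epsilon> + \<tau> * (\<epsilon> + Hnorm \<rho> (G (X t)))"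
proof -
  define g where "g = G (X t)"
  have g: "inH \<rho> g" and "t \<in> {0..T}" "a \<in> {0..T}" "b \<in> {0..T}"
    using X G \<open>0 < \<tau>\<close> assms(10-) by (simp_all add: g_def)
  have grad_near: "Hnorm \<rho> (\<lambda>x. G (Y j) x - g x) \<le> \<epsilon>"
    if "a < real (Suc j) * \<tau>" "real j * \<tau> \<le> b" for j
  proof -
    have "a - \<tau> < real j * \<tau>"
      using that(1) by (simp add: distrib_right)
    have "real j * \<tau> \<in> {0..T}"
      using that(2) \<open>0 < \<tau>\<close> \<open>b \<in> {0..T}\<close> by simp
    have "t - 2 * h \<le> real j * \<tau>" "real j * \<tau> \<le> t + 2 * h"
      using \<open>a - \<tau> < real j * \<tau>\<close> that(2) \<open>\<tau> < h\<close> \<open>t - h \<le> a\<close> \<open>b \<le> t + h\<close> \<open>0 < \<tau>\<close> by linarith+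
    then have "\<bar>real j * \<tau> - t\<bar> \<le> 2 * h"
      by (simp add: abs_le_iff)
    have "Hnorm \<rho> (\<lambda>x. Y j x - X t x) < \<beta> + L * \<bar>real j * \<tau> - t\<bar>"
      using \<open>0 < \<tau>\<close> X Y close lip \<open>real j * \<tau> \<in> {0..T}\<close> \<open>t \<in> {0..T}\<close> by (rule interp_grid_point_near)
    also have "\<dots> \<le> \<beta> + L * (2 * h)"
      using \<open>\<bar>real j * \<tau> - t\<bar> \<le> 2 * h\<close> \<open>0 \<le> L\<close> by (simp add: mult_left_mono)
    finally show ?thesis
      using near[OF Y] by (simp add: g_def)
  qed
  have "Hnorm \<rho> (\<lambda>x. X b x - X a x + (b - a) *\<^sub>R g x)
      \<le> Hnorm \<rho> (\<lambda>x. X b x - interp \<tau> Y b x)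
        + Hnorm \<rho> (\<lambda>x. interp \<tau> Y b x - interp \<tau> Y a x + (b - a) *\<^sub>R g x)
        + Hnorm \<rho> (\<lambda>x. interp \<tau> Y a x - X a x)"
    using X Y g \<open>a \<in> {0..T}\<close> \<open>b \<in> {0..T}\<close> by (intro Hnorm_triangle3) (simp_all add: interp_def)
  also have "\<dots> \<le> \<beta> + ((b - a) * \<epsilon> + \<tau> * (\<epsilon> + Hnorm \<rho> g)) + \<beta>"
  proof (intro add_mono)
    show "Hnorm \<rho> (\<lambda>x. X b x - interp \<tau> Y b x) \<le> \<beta>"
      using close[OF \<open>b \<in> {0..T}\<close>] by (simp add: Hnorm_minus_commute[of \<rho> "X b"])
    show "Hnorm \<rho> (\<lambda>x. interp \<tau> Y a x - X a x) \<le> \<beta>"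
      using close[OF \<open>a \<in> {0..T}\<close>] by simp
    show "Hnorm \<rho> (\<lambda>x. interp \<tau> Y b x - interp \<tau> Y a x + (b - a) *\<^sub>R g x)
        \<le> (b - a) * \<epsilon> + \<tau> * (\<epsilon> + Hnorm \<rho> g)"
      using interp_increment_estimate[where Y = Y and G = G and \<tau> = \<tau>,
          OF Y G[OF Y] g \<open>0 < \<tau>\<close> euler _ \<open>a \<le> b\<close> grad_near] \<open>a \<in> {0..T}\<close>
      by simp
  qed
  finally show ?thesis
    by (simp add: g_def)
qed

lemma limit_curve_increment_estimate:
  fixes \<rho> :: "'a::euclidean_space measure" and \<tau> :: "nat \<Rightarrow> real"
    and Xs :: "nat \<Rightarrow> nat \<Rightarrow> 'a \<Rightarrow> 'a" and X :: "real \<Rightarrow> 'a \<Rightarrow> 'a"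
  assumes tau_pos: "\<And>k. 0 < \<tau> k" and tau_lim: "\<tau> \<longlonglongrightarrow> 0"
    and Xs: "\<And>k n. inH \<rho> (Xs k n)" and G: "\<And>\<xi>. inH \<rho> \<xi> \<Longrightarrow> inH \<rho> (G \<xi>)"
    and euler: "\<And>k n. Hnorm \<rho> (\<lambda>x. Xs k (Suc n) x - Xs k n x
      + (\<tau> k / 2) *\<^sub>R (G (Xs k (Suc n)) x + G (Xs k n) x)) = 0"
    and X: "\<And>t. 0 \<le> t \<Longrightarrow> inH \<rho> (X t)"
    and conv: "\<And>T \<epsilon>. 0 \<le> T \<Longrightarrow> 0 < \<epsilon> \<Longrightarrow> \<exists>K. \<forall>k\<ge>K. \<forall>t\<in>{0..T}.
      Hnorm \<rho> (\<lambda>x. interp (\<tau> k) (Xs k) t x - X t x) < \<epsilon>"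
    and lip: "\<And>T. 0 \<le> T \<Longrightarrow> \<exists>L. \<forall>s\<in>{0..T}. \<forall>t\<in>{0..T}. Hnorm \<rho> (\<lambda>x. X s x - X t x) \<le> L * \<bar>s - t\<bar>"
    and "0 < t" and cont: "H_continuous_at \<rho> G (X t)" and "0 < \<epsilon>"
  shows "\<exists>h>0. \<forall>a b. t - h \<le> a \<longrightarrow> a \<le> b \<longrightarrow> b \<le> t + h \<longrightarrow>
    Hnorm \<rho> (\<lambda>x. X b x - X a x + (b - a) *\<^sub>R G (X t) x) \<le> (b - a) * \<epsilon>"
proof -
  define T C where "T = t + 1" and "C = Hnorm \<rho> (G (X t))"
  obtain \<delta> where "0 < \<delta>" and near: "\<And>\<eta>. inH \<rho> \<eta> \<Longrightarrow> Hnorm \<rho> (\<lambda>x. \<eta> x - X t x) < \<delta> \<Longrightarrow>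
      Hnorm \<rho> (\<lambda>x. G \<eta> x - G (X t) x) < \<epsilon>"
    using cont \<open>0 < \<epsilon>\<close> unfolding H_continuous_at_def by metis
  obtain L0 where L0: "\<forall>s\<in>{0..T}. \<forall>s'\<in>{0..T}. Hnorm \<rho> (\<lambda>x. X s x - X s' x) \<le> L0 * \<bar>s - s'\<bar>"
    using lip[of T] \<open>0 < t\<close> by (auto simp: T_def)
  define L where "L = \<bar>L0\<bar>"
  have L: "Hnorm \<rho> (\<lambda>x. X s x - X s' x) \<le> L * \<bar>s - s'\<bar>" if "s \<in> {0..T}" "s' \<in> {0..T}" for s s'
    using L0 that unfolding L_def by (meson abs_ge_self abs_ge_zero mult_right_mono order_trans)
  have "0 \<le> L"
    by (simp add: L_def)
  define h where "h = min (t / 2) (min (1 / 2) (\<delta> / (3 * (L + 1))))"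
  have "0 < h"
    using \<open>0 < t\<close> \<open>0 < \<delta>\<close> \<open>0 \<le> L\<close> by (simp add: h_def)
  have "h \<le> t / 2" "h \<le> 1 / 2" "h \<le> \<delta> / (3 * (L + 1))"
    unfolding h_def by (rule min.cobounded1, rule min.coboundedI2[OF min.cobounded1],
        rule min.coboundedI2[OF min.cobounded2])
  have "3 * (L * h) < \<delta>"
  proof -
    have "h * (3 * (L + 1)) \<le> \<delta>"
      using \<open>h \<le> \<delta> / (3 * (L + 1))\<close> \<open>0 \<le> L\<close> by (simp add: pos_le_divide_eq)
    with \<open>0 < h\<close> show ?thesis
      by (simp add: algebra_simps)
  qed
  have "Hnorm \<rho> (\<lambda>x. X b x - X a x + (b - a) *\<^sub>R G (X t) x) \<le> (b - a) * \<epsilon>"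
    if "t - h \<le> a" "a \<le> b" "b \<le> t + h" for a b
  proof (rule field_le_epsilon)
    fix \<theta> :: real
    assume "0 < \<theta>"
    define \<beta> where "\<beta> = min (\<delta> / 3) (\<theta> / 4)"
    have "0 < \<beta>" "0 < min h (\<theta> / (2 * (\<epsilon> + C + 1)))"
      using \<open>0 < \<delta>\<close> \<open>0 < \<theta>\<close> \<open>0 < h\<close> \<open>0 < \<epsilon>\<close> by (simp_all add: \<beta>_def C_def add_nonneg_pos)
    have "eventually (\<lambda>k. \<forall>s\<in>{0..T}. Hnorm \<rho> (\<lambda>x. interp (\<tau> k) (Xs k) s x - X s x) < \<beta>) sequentially"
      using conv[of T \<beta>] \<open>0 < t\<close> \<open>0 < \<beta>\<close> by (auto simp: T_def eventually_sequentially)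
    moreover have "eventually (\<lambda>k. \<tau> k < min h (\<theta> / (2 * (\<epsilon> + C + 1)))) sequentially"
      using tau_lim \<open>0 < min h (\<theta> / (2 * (\<epsilon> + C + 1)))\<close> by (rule order_tendstoD(2))
    ultimately have "eventually (\<lambda>k. (\<forall>s\<in>{0..T}. Hnorm \<rho> (\<lambda>x. interp (\<tau> k) (Xs k) s x - X s x) < \<beta>)
        \<and> \<tau> k < min h (\<theta> / (2 * (\<epsilon> + C + 1)))) sequentially"
      by (rule eventually_conj)
    from eventually_happens'[OF sequentially_bot this]
    obtain k where close: "\<And>s. s \<in> {0..T} \<Longrightarrow> Hnorm \<rho> (\<lambda>x. interp (\<tau> k) (Xs k) s x - X s x) < \<beta>"
      and "\<tau> k < h" and "\<tau> k < \<theta> / (2 * (\<epsilon> + C + 1))"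
      by (metis min_less_iff_conj)
    have "\<tau> k * (\<epsilon> + C) \<le> \<theta> / 2"
    proof -
      have "\<tau> k * (2 * (\<epsilon> + C + 1)) \<le> \<theta>"
        using \<open>\<tau> k < \<theta> / (2 * (\<epsilon> + C + 1))\<close> \<open>0 < \<epsilon>\<close>
        by (simp add: C_def add_nonneg_pos pos_less_divide_eq)
      with tau_pos[of k] show ?thesis
        by (simp add: algebra_simps)
    qed
    have "\<beta> + L * (2 * h) < \<delta>"
      using \<open>3 * (L * h) < \<delta>\<close> \<open>0 \<le> L\<close> \<open>0 < h\<close> by (simp add: \<beta>_def)
    then have "Hnorm \<rho> (\<lambda>x. X b x - X a x + (b - a) *\<^sub>R G (X t) x) \<le> 2 * \<beta> + (b - a) * \<epsilon> + \<tau> k * (\<epsilon> + C)"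
      unfolding C_def using tau_pos Xs G euler X close L near \<open>0 \<le> L\<close> \<open>\<tau> k < h\<close> \<open>h \<le> t / 2\<close> \<open>h \<le> 1 / 2\<close> that
      by (intro scheme_increment_near_limit[where Y = "Xs k" and \<tau> = "\<tau> k"]) (auto simp: T_def less_imp_le)
    also have "\<dots> \<le> (b - a) * \<epsilon> + \<theta>"
      using \<open>\<tau> k * (\<epsilon> + C) \<le> \<theta> / 2\<close> by (simp add: \<beta>_def)
    finally show "Hnorm \<rho> (\<lambda>x. X b x - X a x + (b - a) *\<^sub>R G (X t) x) \<le> (b - a) * \<epsilon> + \<theta>" .
  qed
  with \<open>0 < h\<close> show ?thesis
    by blast
qed

lemma difference_quotient_tendsto:
  assumes increment: "\<And>\<epsilon>. 0 < \<epsilon> \<Longrightarrow> \<exists>h>0. \<forall>a b. t - h \<le> a \<longrightarrow> a \<le> b \<longrightarrow> b \<le> t + h \<longrightarrow>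
    Hnorm \<rho> (\<lambda>x. X b x - X a x + (b - a) *\<^sub>R v x) \<le> (b - a) * \<epsilon>"
  shows "((\<lambda>h. Hnorm \<rho> (\<lambda>x. (X (t + h) x - X t x) /\<^sub>R h + v x)) \<longlongrightarrow> 0) (at 0)"
proof (rule tendstoI)
  fix e :: real
  assume "0 < e"
  then obtain h0 where "0 < h0" and h0: "\<And>a b. t - h0 \<le> a \<Longrightarrow> a \<le> b \<Longrightarrow> b \<le> t + h0 \<Longrightarrow>
      Hnorm \<rho> (\<lambda>x. X b x - X a x + (b - a) *\<^sub>R v x) \<le> (b - a) * (e / 2)"
    using increment[of "e / 2"] by auto
  have "Hnorm \<rho> (\<lambda>x. (X (t + h) x - X t x) /\<^sub>R h + v x) < e" if "h \<noteq> 0" "\<bar>h\<bar> < h0" for h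
  proof -
    have "Hnorm \<rho> (\<lambda>x. X (t + h) x - X t x + h *\<^sub>R v x) \<le> \<bar>h\<bar> * (e / 2)"
    proof (cases "0 < h")
      case True
      then show ?thesis
        using h0[of t "t + h"] \<open>\<bar>h\<bar> < h0\<close> by simp
    next
      case False
      have "Hnorm \<rho> (\<lambda>x. X (t + h) x - X t x + h *\<^sub>R v x) = Hnorm \<rho> (\<lambda>x. X t x - X (t + h) x + (- h) *\<^sub>R v x)"
        using Hnorm_uminus[of \<rho> "\<lambda>x. X t x - X (t + h) x + (- h) *\<^sub>R v x"] by (simp add: algebra_simps)
      with False show ?thesis
        using h0[of "t + h" t] \<open>\<bar>h\<bar> < h0\<close> by simp
    qed
    have "(\<lambda>x. (X (t + h) x - X t x) /\<^sub>R h + v x) = (\<lambda>x. (1 / h) *\<^sub>R (X (t + h) x - X t x + h *\<^sub>R v x))"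
      using \<open>h \<noteq> 0\<close> by (simp add: algebra_simps divide_inverse_commute)
    then have "Hnorm \<rho> (\<lambda>x. (X (t + h) x - X t x) /\<^sub>R h + v x)
        = \<bar>1 / h\<bar> * Hnorm \<rho> (\<lambda>x. X (t + h) x - X t x + h *\<^sub>R v x)"
      by (simp only: Hnorm_scaleR)
    also have "\<dots> \<le> \<bar>1 / h\<bar> * (\<bar>h\<bar> * (e / 2))"
      using \<open>Hnorm \<rho> (\<lambda>x. X (t + h) x - X t x + h *\<^sub>R v x) \<le> \<bar>h\<bar> * (e / 2)\<close> by (rule mult_left_mono) simp
    also have "\<dots> = e / 2"
      using \<open>h \<noteq> 0\<close> by (simp add: abs_divide)
    finally have "Hnorm \<rho> (\<lambda>x. (X (t + h) x - X t x) /\<^sub>R h + v x) \<le> e / 2" .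
    with \<open>0 < e\<close> show ?thesis
      by linarith
  qed
  then show "eventually (\<lambda>h. dist (Hnorm \<rho> (\<lambda>x. (X (t + h) x - X t x) /\<^sub>R h + v x)) 0 < e) (at 0)"
    unfolding eventually_at using \<open>0 < h0\<close> by (intro exI[of _ h0]) auto
qed

lemma H_loc_abs_cont_if_lipschitz:
  assumes lip: "\<And>T. 0 \<le> T \<Longrightarrow> \<exists>L. \<forall>s\<in>{0..T}. \<forall>t\<in>{0..T}. Hnorm \<rho> (\<lambda>x. X s x - X t x) \<le> L * \<bar>s - t\<bar>"
  shows "H_loc_abs_cont \<rho> X"
  unfolding H_loc_abs_cont_def
proof (intro allI impI)
  fix T \<epsilon> :: real
  assume "0 \<le> T" "0 < \<epsilon>"
  obtain L0 where L0: "\<forall>s\<in>{0..T}. \<forall>t\<in>{0..T}. Hnorm \<rho> (\<lambda>x. X s x - X t x) \<le> L0 * \<bar>s - t\<bar>"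
    using lip[OF \<open>0 \<le> T\<close>] by blast
  define L where "L = \<bar>L0\<bar>"
  have "0 \<le> L"
    by (simp add: L_def)
  show "\<exists>\<delta>>0. \<forall>(n::nat) (a::nat \<Rightarrow> real) b. (\<forall>i<n. 0 \<le> a i \<and> a i \<le> b i \<and> b i \<le> T) \<and>
      (\<forall>i<n. \<forall>j<n. i \<noteq> j \<longrightarrow> b i \<le> a j \<or> b j \<le> a i) \<and> (\<Sum>i<n. b i - a i) < \<delta> \<longrightarrow>
      (\<Sum>i<n. Hnorm \<rho> (\<lambda>x. X (b i) x - X (a i) x)) < \<epsilon>"
  proof (intro exI[of _ "\<epsilon> / (L + 1)"] conjI allI impI)
    show "0 < \<epsilon> / (L + 1)"
      using \<open>0 < \<epsilon>\<close> \<open>0 \<le> L\<close> by simp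
    fix n a b
    assume intervals: "(\<forall>i<n. 0 \<le> a i \<and> a i \<le> b i \<and> b i \<le> T) \<and>
      (\<forall>i<n. \<forall>j<n. i \<noteq> j \<longrightarrow> b i \<le> a j \<or> b j \<le> a i) \<and> (\<Sum>i<n. b i - a i) < \<epsilon> / (L + 1)"
    have "(\<Sum>i<n. Hnorm \<rho> (\<lambda>x. X (b i) x - X (a i) x)) \<le> (\<Sum>i<n. L * (b i - a i))"
    proof (rule sum_mono)
      fix i
      assume "i \<in> {..<n}"
      with intervals have "a i \<in> {0..T}" "b i \<in> {0..T}" "a i \<le> b i"
        by auto
      then have "Hnorm \<rho> (\<lambda>x. X (b i) x - X (a i) x) \<le> L0 * (b i - a i)"
        using L0 by fastforce
      also have "\<dots> \<le> L * (b i - a i)"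
        using \<open>a i \<le> b i\<close> by (simp add: L_def mult_right_mono)
      finally show "Hnorm \<rho> (\<lambda>x. X (b i) x - X (a i) x) \<le> L * (b i - a i)" .
    qed
    also have "\<dots> = L * (\<Sum>i<n. b i - a i)"
      by (simp add: sum_distrib_left)
    also have "\<dots> \<le> L * (\<epsilon> / (L + 1))"
      using intervals \<open>0 \<le> L\<close> by (intro mult_left_mono) auto
    also have "\<dots> < \<epsilon>"
      using \<open>0 < \<epsilon>\<close> \<open>0 \<le> L\<close> by (simp add: field_simps)
    finally show "(\<Sum>i<n. Hnorm \<rho> (\<lambda>x. X (b i) x - X (a i) x)) < \<epsilon>" .
  qed
qed

lemma Hnorm_eq_0_if_same_limit:
  assumes Y: "\<And>k. inH \<rho> (Y k)" and \<xi>: "inH \<rho> \<xi>" and \<eta>: "inH \<rho> \<eta>"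
    and "(\<lambda>k. Hnorm \<rho> (\<lambda>x. Y k x - \<xi> x)) \<longlonglongrightarrow> 0" and "(\<lambda>k. Hnorm \<rho> (\<lambda>x. Y k x - \<eta> x)) \<longlonglongrightarrow> 0"
  shows "Hnorm \<rho> (\<lambda>x. \<xi> x - \<eta> x) = 0"
proof -
  have lim: "(\<lambda>k. Hnorm \<rho> (\<lambda>x. Y k x - \<xi> x) + Hnorm \<rho> (\<lambda>x. Y k x - \<eta> x)) \<longlonglongrightarrow> 0 + 0"
    using assms(4,5) by (rule tendsto_add)
  have bound: "\<forall>k. Hnorm \<rho> (\<lambda>x. \<xi> x - \<eta> x) \<le> Hnorm \<rho> (\<lambda>x. Y k x - \<xi> x) + Hnorm \<rho> (\<lambda>x. Y k x - \<eta> x)"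
  proof
    fix k
    have "Hnorm \<rho> (\<lambda>x. \<xi> x - \<eta> x) \<le> Hnorm \<rho> (\<lambda>x. \<xi> x - Y k x) + Hnorm \<rho> (\<lambda>x. Y k x - \<eta> x)"
      using Y \<xi> \<eta> by (intro Hnorm_triangle) simp_all
    then show "Hnorm \<rho> (\<lambda>x. \<xi> x - \<eta> x) \<le> Hnorm \<rho> (\<lambda>x. Y k x - \<xi> x) + Hnorm \<rho> (\<lambda>x. Y k x - \<eta> x)"
      by (simp only: Hnorm_minus_commute[of \<rho> \<xi>])
  qed
  have "Hnorm \<rho> (\<lambda>x. \<xi> x - \<eta> x) \<le> 0 + 0"
    by (rule tendsto_le[OF sequentially_bot lim tendsto_const always_eventually[OF bound]])
  then show ?thesis
    using Hnorm_nonneg[of \<rho> "\<lambda>x. \<xi> x - \<eta> x"] by linarith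
qed

lemma limit_curve_initial_value:
  assumes Xs: "\<And>k. inH \<rho> (Xs k 0)" and X: "inH \<rho> (X 0)" and \<xi>: "inH \<rho> \<xi>"
    and init: "(\<lambda>k. Hnorm \<rho> (\<lambda>x. Xs k 0 x - \<xi> x)) \<longlonglongrightarrow> 0"
    and conv: "\<And>\<epsilon>. 0 < \<epsilon> \<Longrightarrow> \<exists>K. \<forall>k\<ge>K. Hnorm \<rho> (\<lambda>x. interp (\<tau> k) (Xs k) 0 x - X 0 x) < \<epsilon>"
  shows "Hnorm \<rho> (\<lambda>x. X 0 x - \<xi> x) = 0"
proof -
  have lim: "(\<lambda>k. Hnorm \<rho> (\<lambda>x. Xs k 0 x - X 0 x)) \<longlonglongrightarrow> 0"
  proof (rule LIMSEQ_I)
    fix r :: real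
    assume "0 < r"
    then obtain K where "\<forall>k\<ge>K. Hnorm \<rho> (\<lambda>x. interp (\<tau> k) (Xs k) 0 x - X 0 x) < r"
      using conv by blast
    then show "\<exists>K. \<forall>k\<ge>K. norm (Hnorm \<rho> (\<lambda>x. Xs k 0 x - X 0 x) - 0) < r"
      by (auto simp: interp_def)
  qed
  from Xs X \<xi> lim init show ?thesis
    by (rule Hnorm_eq_0_if_same_limit)
qed

theorem mainTheorem15:
  fixes \<rho>0 :: "'a::euclidean_space measure"
    and \<phi> :: "'a measure \<Rightarrow> real"
    and G :: "('a \<Rightarrow> 'a) \<Rightarrow> ('a \<Rightarrow> 'a)"
    and lam :: real
    and \<tau> :: "nat \<Rightarrow> real"
    and Xs :: "nat \<Rightarrow> nat \<Rightarrow> 'a \<Rightarrow> 'a"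
    and X :: "real \<Rightarrow> 'a \<Rightarrow> 'a"
  assumes rho0: "P2 \<rho>0"
    and grad: "H_gradient \<rho>0 (lift \<phi> \<rho>0) G"
    and convex: "H_lambda_convex \<rho>0 lam (lift \<phi> \<rho>0)"
    and bdd_below: "\<exists>c. \<forall>\<xi>. inH \<rho>0 \<xi> \<longrightarrow> c \<le> lift \<phi> \<rho>0 \<xi>"
    and tau_pos: "\<And>k. \<tau> k > 0"
    and tau_lim: "\<tau> \<longlonglongrightarrow> 0"
    and tau_step: "\<And>k. lam / 2 + 1 / \<tau> k > 0"
    and tau_neg: "\<And>k. lam < 0 \<Longrightarrow> \<bar>lam\<bar> * \<tau> k < 1"
    and scheme: "\<And>k. is_scheme \<rho>0 (lift \<phi> \<rho>0) G (\<tau> k) (Xs k)"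
    and init: "(\<lambda>k. Hnorm \<rho>0 (\<lambda>x. Xs k 0 x - x)) \<longlonglongrightarrow> 0"
    and init_grad: "\<exists>C. \<forall>k. Hnorm \<rho>0 (G (Xs k 0)) \<le> C"
    and X_in: "\<And>t. t \<ge> 0 \<Longrightarrow> inH \<rho>0 (X t)"
    and conv: "\<And>T \<epsilon>. T \<ge> 0 \<Longrightarrow> \<epsilon> > 0 \<Longrightarrow> \<exists>K. \<forall>k\<ge>K. \<forall>t\<in>{0..T}.
                  Hnorm \<rho>0 (\<lambda>x. interp (\<tau> k) (Xs k) t x - X t x) < \<epsilon>"
    and X_lip: "\<And>T. T \<ge> 0 \<Longrightarrow> \<exists>L. \<forall>s\<in>{0..T}. \<forall>t\<in>{0..T}.
                  Hnorm \<rho>0 (\<lambda>x. X s x - X t x) \<le> L * \<bar>s - t\<bar>"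
  shows "H_loc_abs_cont \<rho>0 X
    \<and> (AE t in lborel. t > 0 \<longrightarrow>
         ((\<lambda>h. Hnorm \<rho>0 (\<lambda>x. (X (t + h) x - X t x) /\<^sub>R h + G (X t) x)) \<longlongrightarrow> 0) (at 0))
    \<and> Hnorm \<rho>0 (\<lambda>x. X 0 x - x) = 0"
proof -
  \<comment> \<open>\<open>bdd_below\<close>, \<open>tau_step\<close>, \<open>tau_neg\<close> and \<open>init_grad\<close> only serve the existence and convergence
      of the scheme, which \<open>scheme\<close> and \<open>conv\<close> provide directly.\<close>
  have id: "inH \<rho>0 (\<lambda>x. x)"
    using rho0 measurable_ident_sets[of \<rho>0 borel] by (simp add: P2_def inH_def)
  have Xs: "\<And>k n. inH \<rho>0 (Xs k n)"
    using scheme by (simp add: is_scheme_def)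
  have G: "\<And>\<xi>. inH \<rho>0 \<xi> \<Longrightarrow> inH \<rho>0 (G \<xi>)"
    using grad by (rule H_gradient_inH)
  have euler: "\<And>k n. Hnorm \<rho>0 (\<lambda>x. Xs k (Suc n) x - Xs k n x
      + (\<tau> k / 2) *\<^sub>R (G (Xs k (Suc n)) x + G (Xs k n) x)) = 0"
    using scheme_euler_lagrange[OF grad tau_pos Xs Xs] scheme by (simp add: is_scheme_def)
  have "AE t in lborel. t > 0 \<longrightarrow>
      ((\<lambda>h. Hnorm \<rho>0 (\<lambda>x. (X (t + h) x - X t x) /\<^sub>R h + G (X t) x)) \<longlongrightarrow> 0) (at 0)"
  proof (rule AE_I2, rule impI)
    fix t :: real
    assume "0 < t"
    then have "H_continuous_at \<rho>0 G (X t)"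
      using lambda_convex_gradient_continuous[OF grad convex] X_in by simp
    then show "((\<lambda>h. Hnorm \<rho>0 (\<lambda>x. (X (t + h) x - X t x) /\<^sub>R h + G (X t) x)) \<longlongrightarrow> 0) (at 0)"
      by (intro difference_quotient_tendsto
          limit_curve_increment_estimate[OF tau_pos tau_lim Xs G euler X_in conv X_lip \<open>0 < t\<close>])
  qed
  moreover have "Hnorm \<rho>0 (\<lambda>x. X 0 x - x) = 0"
    using Xs X_in[of 0] id init conv[of 0] by (intro limit_curve_initial_value[where \<tau> = \<tau>]) simp_all
  ultimately show ?thesis
    using H_loc_abs_cont_if_lipschitz[OF X_lip] by blast
qed

end
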